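(* Let $I$ DMUs have nonnegative nominal output data $Y\in\mathbb{R}^{M\times I}$ and input data $X\in\mathbb{R}^{N\times I}$, fix a DMU $\hat\imath$ and $\sigma\ge0$ with $\sigma\le X_{n\hat\imath}$ for all $n$ and $\sigma\le Y_{mi}$ for all $m$ and all $i\neq\hat\imath$. For perturbations $\Delta\in\mathbb{R}^{M\times I}$, $\nabla\in\mathbb{R}^{N\times I}$ with all entries in $[-\sigma,\sigma]$ and $Y+\Delta\ge0$, $X+\nabla\ge0$, let $E^{\hat\imath}(\Delta,\nabla)=\min\{\theta:(Y+\Delta)\lambda\ge y^{\hat\imath}+\delta_y^{\hat\imath},\ (X+\nabla)\lambda\le\theta(x^{\hat\imath}+\delta_x^{\hat\imath}),\ e^T\lambda=1,\ \lambda\ge0\}$, where $\delta_y^{\hat\imath},\delta_x^{\hat\imath}$ are the $\hat\imath$-th columns of $\Delta,\nabla$. Then the maximum of $E^{\hat\imath}(\Delta,\nabla)$ over all such admissible perturbations is attained by the choice $\Delta_{mi}=-\sigma$, $\nabla_{ni}=\sigma$ for all $i\neq\hat\imath$, and $\Delta_{m\hat\imath}=\sigma$, $\nabla_{n\hat\imath}=-\sigma$, for all $m,n$.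
   Context: Input-oriented BCC (variable returns to scale) DEA: the efficiency score of DMU $k$ with data $(X,Y)$ is $\min\{\theta: Y\lambda\ge y^k,\ X\lambda\le\theta x^k,\ e^T\lambda=1,\ \lambda\ge0\}$, $e$ the all-ones vector, $y^k,x^k$ the $k$-th columns. Box uncertainty of size $\sigma$: each data entry may deviate from its nominal value by at most $\sigma$ (data scaled so the same $\sigma$ applies to all inputs and outputs), and the perturbed data must remain nonnegative (standing assumption of the paper). *)

theory Defs
  imports Complex_Main "HOL-Library.Extended_Real"
begin

text \<open>Input-oriented BCC efficiency score of DMU k: the minimum of the LP,
  rendered as the infimum in the extended reals (equal to the minimum
  whenever the LP has an optimal value).\<close>

definition bcc_eff ::
  "nat \<Rightarrow> nat \<Rightarrow> nat \<Rightarrow> (nat \<Rightarrow> nat \<Rightarrow> real) \<Rightarrow> (nat \<Rightarrow> nat \<Rightarrow> real) \<Rightarrow> nat \<Rightarrow> ereal" where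
  "bcc_eff M N I Y X k = Inf {ereal \<theta> | \<theta>. \<exists>lam :: nat \<Rightarrow> real.
      (\<forall>i<I. 0 \<le> lam i) \<and> (\<Sum>i<I. lam i) = 1 \<and>
      (\<forall>m<M. Y m k \<le> (\<Sum>i<I. Y m i * lam i)) \<and>
      (\<forall>n<N. (\<Sum>i<I. X n i * lam i) \<le> \<theta> * X n k)}"

definition admissible ::
  "real \<Rightarrow> nat \<Rightarrow> nat \<Rightarrow> nat \<Rightarrow> (nat \<Rightarrow> nat \<Rightarrow> real) \<Rightarrow> (nat \<Rightarrow> nat \<Rightarrow> real)
     \<Rightarrow> (nat \<Rightarrow> nat \<Rightarrow> real) \<Rightarrow> (nat \<Rightarrow> nat \<Rightarrow> real) \<Rightarrow> bool" where
  "admissible \<sigma> M N I Y X D G \<longleftrightarrow>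
     (\<forall>m<M. \<forall>i<I. \<bar>D m i\<bar> \<le> \<sigma> \<and> 0 \<le> Y m i + D m i) \<and>
     (\<forall>n<N. \<forall>i<I. \<bar>G n i\<bar> \<le> \<sigma> \<and> 0 \<le> X n i + G n i)"

definition pert_eff ::
  "nat \<Rightarrow> nat \<Rightarrow> nat \<Rightarrow> (nat \<Rightarrow> nat \<Rightarrow> real) \<Rightarrow> (nat \<Rightarrow> nat \<Rightarrow> real) \<Rightarrow> nat
     \<Rightarrow> (nat \<Rightarrow> nat \<Rightarrow> real) \<Rightarrow> (nat \<Rightarrow> nat \<Rightarrow> real) \<Rightarrow> ereal" where
  "pert_eff M N I Y X k D G = bcc_eff M N I (\<lambda>m i. Y m i + D m i) (\<lambda>n i. X n i + G n i) k"

end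

theory Submission
  imports Defs
begin

text \<open>Every weight vector \<open>\<lambda>\<close> that is feasible, with value \<open>\<theta>\<close>, for the worst-case data
  (the evaluated DMU improved by \<open>\<sigma>\<close> in every entry, all others worsened by \<open>\<sigma>\<close>) stays feasible
  with the same \<open>\<theta>\<close> for any admissible perturbation. Indeed, after subtracting the nominal
  part, a constraint depends on the perturbation \<open>d\<close> through \<open>\<Sum>\<^sub>i d\<^sub>i \<lambda>\<^sub>i - c d\<^sub>k\<close>, with
  \<open>c = 1\<close> for outputs and \<open>c = \<theta>\<close> for inputs; this is monotone in each \<open>d\<^sub>i\<close> (\<open>i \<noteq> k\<close>) and
  antitone in \<open>d\<^sub>k\<close> as soon as \<open>\<lambda>\<^sub>k \<le> c\<close>. For outputs \<open>\<lambda>\<^sub>k \<le> 1\<close> because the weights sum to 1;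
  for inputs \<open>\<lambda>\<^sub>k \<le> \<theta>\<close> follows from the worst-case constraint of an input with
  \<open>\<sigma> < x\<^sub>n\<^sub>k\<close>. So the worst-case feasible set is the smaller one and its infimum the larger.\<close>

definition bcc_feasible ::
  "nat \<Rightarrow> nat \<Rightarrow> nat \<Rightarrow> (nat \<Rightarrow> nat \<Rightarrow> real) \<Rightarrow> (nat \<Rightarrow> nat \<Rightarrow> real) \<Rightarrow> nat
     \<Rightarrow> real \<Rightarrow> (nat \<Rightarrow> real) \<Rightarrow> bool" where
  "bcc_feasible M N I Y X k \<theta> lam \<longleftrightarrow>
     (\<forall>i<I. 0 \<le> lam i) \<and> (\<Sum>i<I. lam i) = 1 \<and>
     (\<forall>m<M. Y m k \<le> (\<Sum>i<I. Y m i * lam i)) \<and>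
     (\<forall>n<N. (\<Sum>i<I. X n i * lam i) \<le> \<theta> * X n k)"

lemma bcc_eff_eq_Inf_feasible:
  "bcc_eff M N I Y X k = Inf {ereal \<theta> | \<theta>. \<exists>lam. bcc_feasible M N I Y X k \<theta> lam}"
  unfolding bcc_eff_def bcc_feasible_def ..

lemma bcc_eff_le_if_feasible_subset:
  assumes "\<And>\<theta> lam. bcc_feasible M N I Y' X' k \<theta> lam \<Longrightarrow> bcc_feasible M N I Y X k \<theta> lam"
  shows "bcc_eff M N I Y X k \<le> bcc_eff M N I Y' X' k"
  unfolding bcc_eff_eq_Inf_feasible using assms by (intro Inf_superset_mono) blast

lemma sum_mult_minus_own_mono:
  fixes d d' lam :: "nat \<Rightarrow> real"
  assumes k: "k < I" and lam: "\<forall>i<I. 0 \<le> lam i" and "lam k \<le> c"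
    and others: "\<forall>i<I. i \<noteq> k \<longrightarrow> d' i \<le> d i" and "d k \<le> d' k"
  shows "(\<Sum>i<I. d' i * lam i) - c * d' k \<le> (\<Sum>i<I. d i * lam i) - c * d k"
proof -
  have "(\<Sum>i\<in>{..<I}-{k}. d' i * lam i) \<le> (\<Sum>i\<in>{..<I}-{k}. d i * lam i)"
    using others lam by (intro sum_mono mult_right_mono) auto
  moreover have "(d' k - d k) * lam k \<le> (d' k - d k) * c"
    using assms by (intro mult_left_mono) auto
  ultimately show ?thesis
    using k by (simp add: sum.remove algebra_simps)
qed

lemma weight_le_if_weighted_sum_le:
  fixes b lam :: "nat \<Rightarrow> real"
  assumes k: "k < I" and "\<forall>i<I. 0 \<le> b i" and "\<forall>i<I. 0 \<le> lam i" and "0 < b k"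
    and sum_le: "(\<Sum>i<I. b i * lam i) \<le> \<theta> * b k"
  shows "lam k \<le> \<theta>"
proof -
  have "b k * lam k \<le> (\<Sum>i<I. b i * lam i)"
    using assms by (intro member_le_sum[of k "{..<I}" "\<lambda>i. b i * lam i"]) auto
  with sum_le have "b k * lam k \<le> b k * \<theta>"
    by (simp add: mult.commute)
  with \<open>0 < b k\<close> show ?thesis
    by simp
qed

lemma worst_case_feasible_weight_le:
  assumes feasible: "bcc_feasible M N I Y (\<lambda>n i. X n i + (if i = k then - \<sigma> else \<sigma>)) k \<theta> lam"
    and k: "k < I" and "\<forall>n<N. \<forall>i<I. 0 \<le> X n i" and "0 \<le> \<sigma>" and n: "n < N" "\<sigma> < X n k"
  shows "lam k \<le> \<theta>"
proof (rule weight_le_if_weighted_sum_le[OF k, where b = "\<lambda>i. X n i + (if i = k then - \<sigma> else \<sigma>)"])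
  show "\<forall>i<I. 0 \<le> X n i + (if i = k then - \<sigma> else \<sigma>)"
    using assms by auto
  show "\<forall>i<I. 0 \<le> lam i"
    using feasible by (simp add: bcc_feasible_def)
  show "0 < X n k + (if k = k then - \<sigma> else \<sigma>)"
    using n by simp
  show "(\<Sum>i<I. (X n i + (if i = k then - \<sigma> else \<sigma>)) * lam i) \<le> \<theta> * (X n k + (if k = k then - \<sigma> else \<sigma>))"
    using feasible n unfolding bcc_feasible_def by blast
qed

lemma bcc_feasible_perturbation_mono:
  assumes k: "k < I" and "lam k \<le> \<theta>"
    and out_others: "\<forall>m<M. \<forall>i<I. i \<noteq> k \<longrightarrow> D' m i \<le> D m i"
    and out_own: "\<forall>m<M. D m k \<le> D' m k"
    and in_others: "\<forall>n<N. \<forall>i<I. i \<noteq> k \<longrightarrow> G n i \<le> G' n i"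
    and in_own: "\<forall>n<N. G' n k \<le> G n k"
    and feasible: "bcc_feasible M N I (\<lambda>m i. Y m i + D' m i) (\<lambda>n i. X n i + G' n i) k \<theta> lam"
  shows "bcc_feasible M N I (\<lambda>m i. Y m i + D m i) (\<lambda>n i. X n i + G n i) k \<theta> lam"
proof -
  have lam: "\<forall>i<I. 0 \<le> lam i" and sum_lam: "(\<Sum>i<I. lam i) = 1"
    using feasible by (simp_all add: bcc_feasible_def)
  have "lam k \<le> 1"
    using member_le_sum[of k "{..<I}" lam] lam sum_lam k by auto
  have split: "(\<Sum>i<I. (a i + d i) * lam i) = (\<Sum>i<I. a i * lam i) + (\<Sum>i<I. d i * lam i)"
    for a d :: "nat \<Rightarrow> real"
    by (simp add: distrib_right sum.distrib)
  have "Y m k + D m k \<le> (\<Sum>i<I. (Y m i + D m i) * lam i)" if "m < M" for m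
  proof -
    have "(\<Sum>i<I. D' m i * lam i) - 1 * D' m k \<le> (\<Sum>i<I. D m i * lam i) - 1 * D m k"
      using sum_mult_minus_own_mono[OF k lam \<open>lam k \<le> 1\<close>] out_others out_own that by simp
    moreover have "Y m k + D' m k \<le> (\<Sum>i<I. (Y m i + D' m i) * lam i)"
      using feasible that by (simp add: bcc_feasible_def)
    ultimately show ?thesis
      unfolding split by linarith
  qed
  moreover have "(\<Sum>i<I. (X n i + G n i) * lam i) \<le> \<theta> * (X n k + G n k)" if "n < N" for n
  proof -
    have "(\<Sum>i<I. G n i * lam i) - \<theta> * G n k \<le> (\<Sum>i<I. G' n i * lam i) - \<theta> * G' n k"
      using sum_mult_minus_own_mono[OF k lam \<open>lam k \<le> \<theta>\<close>] in_others in_own that by simp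
    moreover have "(\<Sum>i<I. (X n i + G' n i) * lam i) \<le> \<theta> * (X n k + G' n k)"
      using feasible that by (simp add: bcc_feasible_def)
    ultimately show ?thesis
      unfolding split distrib_left by linarith
  qed
  ultimately show ?thesis
    using lam sum_lam by (simp add: bcc_feasible_def)
qed

lemma admissible_bounds:
  assumes "admissible \<sigma> M N I Y X D G"
  shows "m < M \<Longrightarrow> i < I \<Longrightarrow> - \<sigma> \<le> D m i \<and> D m i \<le> \<sigma>"
    and "n < N \<Longrightarrow> i < I \<Longrightarrow> - \<sigma> \<le> G n i \<and> G n i \<le> \<sigma>"
proof -
  assume "m < M" "i < I"
  with assms have "\<bar>D m i\<bar> \<le> \<sigma>"
    unfolding admissible_def by simp
  then show "- \<sigma> \<le> D m i \<and> D m i \<le> \<sigma>"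
    by linarith
next
  assume "n < N" "i < I"
  with assms have "\<bar>G n i\<bar> \<le> \<sigma>"
    unfolding admissible_def by simp
  then show "- \<sigma> \<le> G n i \<and> G n i \<le> \<sigma>"
    by linarith
qed

theorem theorem3:
  fixes M N I k :: nat and \<sigma> :: real
    and Y X :: "nat \<Rightarrow> nat \<Rightarrow> real"
  assumes "k < I"
    and "\<forall>m<M. \<forall>i<I. 0 \<le> Y m i"
    and "\<forall>n<N. \<forall>i<I. 0 \<le> X n i"
    and "0 \<le> \<sigma>"
    and "\<forall>n<N. \<sigma> \<le> X n k"
    and "\<forall>m<M. \<forall>i<I. i \<noteq> k \<longrightarrow> \<sigma> \<le> Y m i"
    and "\<exists>n<N. \<sigma> < X n k"
  shows "admissible \<sigma> M N I Y X (\<lambda>m i. if i = k then \<sigma> else - \<sigma>) (\<lambda>n i. if i = k then - \<sigma> else \<sigma>)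
    \<and> (\<forall>D G. admissible \<sigma> M N I Y X D G \<longrightarrow>
         pert_eff M N I Y X k D G
           \<le> pert_eff M N I Y X k (\<lambda>m i. if i = k then \<sigma> else - \<sigma>) (\<lambda>n i. if i = k then - \<sigma> else \<sigma>))"
proof (intro conjI allI impI)
  let ?D' = "\<lambda>m i. if i = k then \<sigma> else - \<sigma>" and ?G' = "\<lambda>n i. if i = k then - \<sigma> else \<sigma>"
  show "admissible \<sigma> M N I Y X ?D' ?G'"
    using assms by (auto simp: admissible_def)
  fix D G
  assume "admissible \<sigma> M N I Y X D G"
  note bounds = admissible_bounds[OF this]
  obtain n0 where n0: "n0 < N" "\<sigma> < X n0 k"
    using assms(7) by blast
  show "pert_eff M N I Y X k D G \<le> pert_eff M N I Y X k ?D' ?G'"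
    unfolding pert_eff_def
  proof (rule bcc_eff_le_if_feasible_subset)
    fix \<theta> lam
    assume feasible: "bcc_feasible M N I (\<lambda>m i. Y m i + ?D' m i) (\<lambda>n i. X n i + ?G' n i) k \<theta> lam"
    have "lam k \<le> \<theta>"
      using worst_case_feasible_weight_le[OF feasible assms(1,3,4) n0] .
    show "bcc_feasible M N I (\<lambda>m i. Y m i + D m i) (\<lambda>n i. X n i + G n i) k \<theta> lam"
    proof (rule bcc_feasible_perturbation_mono[OF assms(1) \<open>lam k \<le> \<theta>\<close> _ _ _ _ feasible])
      show "\<forall>m<M. \<forall>i<I. i \<noteq> k \<longrightarrow> ?D' m i \<le> D m i" "\<forall>m<M. D m k \<le> ?D' m k"
        using bounds(1) assms(1) by simp_all
      show "\<forall>n<N. \<forall>i<I. i \<noteq> k \<longrightarrow> G n i \<le> ?G' n i" "\<forall>n<N. ?G' n k \<le> G n k"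
        using bounds(2) assms(1) by simp_all
    qed
  qed
qed

end
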